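(* There is a constant $C>0$ such that for all sufficiently large $n$ the following holds. Let $u(z) = z-\zeta$ for some $\zeta \in \mathbb{C}$ with $|\zeta|=1$. Then for any $\delta \in [0,1)$, $$\prod_{j=J_1}^{J_2-1} \left|u\left(h\left(e^{2\pi i \frac{j+\delta}{m}}\right)\right)\right| \le \exp(Cn^{1/5}\log^5n).$$
   Context: Let $n$ be a positive integer, $a = n^{-2/5}$, $r = a^{-1/2}$ (floor functions omitted throughout, so $r$, $m$, $J_1$, $J_2$ below are integers). Let $r_* \in \{1,\dots,r\}$ be such that $\sum_{j=1}^{r_*} \frac{1}{\log^2(j+3)}-\sum_{j=r_*+1}^r \frac{1}{\log^2(j+3)} \in [20,21]$. Let $\epsilon_j = +1$ for $1 \le j \le r_*$ and $\epsilon_j = -1$ for $r_*< j \le r$. Let $\lambda_a>0$ satisfy $\sum_{j=1}^r \frac{\lambda_a}{j^2\log^2(j+3)} = 1$, $d_j = \frac{\lambda_a}{j^2\log^2(j+3)}$, $\widetilde{h}(z) = \widetilde{\lambda}_a\sum_{j=1}^r \epsilon_j d_j z^j$ with $\widetilde{\lambda}_a>0$ chosen so that $\widetilde{h}(1)=1$, and $h(z) = (1-a^{10})\widetilde{h}(z)$. Let $\alpha=e^{ia}$, $\beta=e^{-ia}$, $G_a = \{z \in \mathbb{C} : \arg(\frac{\alpha-z}{z-\beta}) \in (\frac{a}{2},a)\}$. Fix absolute constants $c_4,c_5,C_6>0$ such that, for all sufficiently small $a>0$, $h(e^{2\pi i t}) \in G_a$ whenever $|t|\le c_4 a$, and $|h(e^{2\pi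 i t})| \le 1-c_5\frac{|t|}{\log^2(a^{-1})}$ whenever $t \in [-\frac12,\frac12]\setminus[-C_6a^{1/2},C_6a^{1/2}]$. Set $m = c_4^{-1}n^{2/5}$, $J_1 = c_5^{-1}n^{-1/5}m\log^4 n$, and $J_2 = m-J_1$. $\log$ is the natural logarithm. *)

theory Defs
  imports "HOL-Analysis.Analysis"
begin

definition rr :: "real \<Rightarrow> nat" where
  "rr a = nat \<lfloor>a powr (-1/2)\<rfloor>"

definition rstar_ok :: "real \<Rightarrow> nat \<Rightarrow> bool" where
  "rstar_ok a s \<longleftrightarrow> s \<in> {1..rr a} \<and>
     (\<Sum>j=1..s. 1 / (ln (real j + 3))^2) - (\<Sum>j=s+1..rr a. 1 / (ln (real j + 3))^2) \<in> {20..21}"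

definition lam :: "real \<Rightarrow> real" where
  "lam a = 1 / (\<Sum>j=1..rr a. 1 / ((real j)^2 * (ln (real j + 3))^2))"

definition dd :: "real \<Rightarrow> nat \<Rightarrow> real" where
  "dd a j = lam a / ((real j)^2 * (ln (real j + 3))^2)"

definition eps :: "nat \<Rightarrow> nat \<Rightarrow> real" where
  "eps s j = (if j \<le> s then 1 else -1)"

text \<open>tilde-lambda chosen so that htil(1) = 1\<close>
definition ltil :: "(real \<Rightarrow> nat) \<Rightarrow> real \<Rightarrow> real" where
  "ltil rs a = 1 / (\<Sum>j=1..rr a. eps (rs a) j * dd a j)"

definition htil :: "(real \<Rightarrow> nat) \<Rightarrow> real \<Rightarrow> complex \<Rightarrow> complex" where
  "htil rs a z = of_real (ltil rs a) * (\<Sum>j=1..rr a. of_real (eps (rs a) j * dd a j) * z ^ j)"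

definition hh :: "(real \<Rightarrow> nat) \<Rightarrow> real \<Rightarrow> complex \<Rightarrow> complex" where
  "hh rs a z = of_real (1 - a ^ 10) * htil rs a z"

definition Ga :: "real \<Rightarrow> complex set" where
  "Ga a = {z. Arg ((exp (\<i> * of_real a) - z) / (z - exp (- \<i> * of_real a))) \<in> {a/2<..<a}}"

definition aa :: "nat \<Rightarrow> real" where
  "aa n = real n powr (-2/5)"

definition mm :: "real \<Rightarrow> nat \<Rightarrow> int" where
  "mm c4 n = \<lfloor>real n powr (2/5) / c4\<rfloor>"

definition JJ1 :: "real \<Rightarrow> real \<Rightarrow> nat \<Rightarrow> int" where
  "JJ1 c4 c5 n = \<lfloor>real n powr (-1/5) * of_int (mm c4 n) * (ln (real n))^4 / c5\<rfloor>"

definition JJ2 :: "real \<Rightarrow> real \<Rightarrow> nat \<Rightarrow> int" where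
  "JJ2 c4 c5 n = mm c4 n - JJ1 c4 c5 n"

end

(*
  Put x_j = conj(zeta) * h(w_j) at the sample points w_j = exp(2 pi i (j + delta) / m), 0 <= j < m.
  For |x| <= rho < 1 we have log|1 - x| <= - Re (sum_{k=1..K} x^k / k) + rho^(K+1) / (1 - rho).
  As h is a polynomial of degree r without constant term and K r < m, the power sums
  sum_j x_j^k over all m sample points vanish for 1 <= k <= K.  Hence the truncated logarithm
  series summed over the middle indices J1 <= j < J2 is minus the same series summed over the
  2 J1 remaining indices, where |h| <= ltil <= 1 + O(1/r); for K ~ n^(1/5) / (2 c4) this
  contributes 2 J1 (1 + O(1/r))^K H_K = O(n^(1/5) log^5 n).  On the middle indices
  |h(w_j)| <= 1 - eta with eta ~ c5 (J1/m) / log^2(1/a) ~ n^(-1/5) log^2 n, so the error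
  terms m (1 - eta)^(K+1) / eta are negligible.
*)
theory Submission
  imports Defs "HOL-Computational_Algebra.Polynomial" "HOL-Real_Asymp.Real_Asymp"
begin

section \<open>Truncated logarithms at equidistributed points\<close>

definition unit_grid :: "int \<Rightarrow> real \<Rightarrow> int \<Rightarrow> complex" where
  "unit_grid m \<delta> j = cis (2 * pi * (of_int j + \<delta>) / of_int m)"

lemma ln_norm_one_minus_le:
  fixes x :: complex
  assumes "norm x \<le> \<rho>" "\<rho> < 1"
  shows "ln (norm (1 - x)) \<le> - Re (\<Sum>k=1..K. x ^ k / of_nat k) + \<rho> ^ (K + 1) / (1 - \<rho>)"
proof -
  define f where "f = (\<lambda>n. - (x ^ n) / of_nat n)"
  have "0 \<le> \<rho>" "norm x < 1"
    using assms norm_ge_zero[of x] by linarith+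
  have "f sums Ln (1 - x)"
    using Ln_series'[of "-x"] \<open>norm x < 1\<close> by (simp add: f_def)
  hence "Ln (1 - x) = (\<Sum>n. f (n + (K + 1))) + (\<Sum>n<K+1. f n)"
    using suminf_split_initial_segment sums_summable sums_unique by metis
  also have "(\<Sum>n<K+1. f n) = - (\<Sum>k=1..K. x ^ k / of_nat k)"
    by (simp add: f_def lessThan_Suc_atMost atMost_atLeast0 sum.atLeast_Suc_atMost sum_negf)
  finally have Ln_eq: "Ln (1 - x) = (\<Sum>n. f (n + (K + 1))) - (\<Sum>k=1..K. x ^ k / of_nat k)"
    by simp
  have geom: "(\<lambda>n. \<rho> ^ (n + (K + 1))) sums (\<rho> ^ (K + 1) / (1 - \<rho>))"
    using sums_mult2[OF geometric_sums[of \<rho>], of "\<rho> ^ (K + 1)"] \<open>0 \<le> \<rho>\<close> assms(2)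
    by (simp add: power_add mult_ac)
  have f_le: "norm (f n) \<le> \<rho> ^ n" if "n \<ge> 1" for n
  proof -
    have "norm (f n) = norm x ^ n / real n"
      by (simp add: f_def norm_divide norm_power)
    also have "\<dots> \<le> norm x ^ n"
      using that by (simp add: divide_le_eq mult_le_cancel_left1)
    also have "\<dots> \<le> \<rho> ^ n"
      by (simp add: assms(1) power_mono)
    finally show ?thesis .
  qed
  have "norm (\<Sum>n. f (n + (K + 1))) \<le> (\<Sum>n. \<rho> ^ (n + (K + 1)))"
    by (rule norm_suminf_le[OF f_le sums_summable[OF geom]]) simp
  hence tail: "norm (\<Sum>n. f (n + (K + 1))) \<le> \<rho> ^ (K + 1) / (1 - \<rho>)"
    by (simp only: sums_unique[OF geom, symmetric])
  have "1 - x \<noteq> 0"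
    using \<open>norm x < 1\<close> by auto
  hence "ln (norm (1 - x)) = Re (Ln (1 - x))"
    by simp
  also have "\<dots> \<le> norm (\<Sum>n. f (n + (K + 1))) - Re (\<Sum>k=1..K. x ^ k / of_nat k)"
    using complex_Re_le_cmod by (simp add: Ln_eq)
  finally show ?thesis
    using tail by simp
qed

lemma sum_unit_grid_power_eq_0:
  assumes "0 < i" "int i < m"
  shows "(\<Sum>j\<in>{0..<m}. unit_grid m \<delta> j ^ i) = 0"
proof -
  define M where "M = nat m"
  define \<omega> where "\<omega> = cis (2 * pi * real i / real M)"
  have M: "m = int M" "0 < M" "i < M"
    using assms by (auto simp: M_def)
  have "\<omega> \<noteq> 1"
    using complex_root_unity_eq_1[of M i] M assms(1)
    by (auto simp: \<omega>_def cis_conv_exp mult_ac dest: dvd_imp_le)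
  moreover have "\<omega> ^ M = cis (real M * (2 * pi * real i / real M))"
    by (simp only: \<omega>_def Complex.DeMoivre)
  hence "\<omega> ^ M = 1"
    using M by simp
  ultimately have geom: "(\<Sum>j<M. \<omega> ^ j) = 0"
    by (simp add: geometric_sum)
  have "{0..<m} = int ` {..<M}"
    using M by (auto simp: image_iff intro!: bexI[of _ "nat _"])
  hence "(\<Sum>j\<in>{0..<m}. unit_grid m \<delta> j ^ i)
       = (\<Sum>j<M. cis (2 * pi * real i * \<delta> / real M) * \<omega> ^ j)"
    by (simp add: unit_grid_def sum.reindex M \<omega>_def Complex.DeMoivre cis_mult[symmetric]
        algebra_simps add_divide_distrib)
  also have "\<dots> = 0"
    by (simp add: sum_distrib_left[symmetric] geom)
  finally show ?thesis .
qed

lemma sum_poly_unit_grid_eq_0: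
  assumes "coeff Q 0 = 0" "int (degree Q) < m"
  shows "(\<Sum>j\<in>{0..<m}. poly Q (unit_grid m \<delta> j)) = 0"
proof -
  have "(\<Sum>j\<in>{0..<m}. poly Q (unit_grid m \<delta> j))
      = (\<Sum>i\<le>degree Q. coeff Q i * (\<Sum>j\<in>{0..<m}. unit_grid m \<delta> j ^ i))"
    by (simp add: poly_altdef sum_distrib_left sum.swap[of _ "{0..<m}"])
  also have "\<dots> = 0"
  proof (intro sum.neutral ballI)
    fix i assume "i \<in> {..degree Q}"
    thus "coeff Q i * (\<Sum>j\<in>{0..<m}. unit_grid m \<delta> j ^ i) = 0"
      using assms sum_unit_grid_power_eq_0[of i m \<delta>] by (cases "i = 0") auto
  qed
  finally show ?thesis .
qed

lemma sum_power_poly_unit_grid_eq_neg_compl: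
  assumes "coeff Q 0 = 0" "0 < k" "int (k * degree Q) < m" "R \<subseteq> {0..<m}"
  shows "(\<Sum>j\<in>R. poly Q (unit_grid m \<delta> j) ^ k)
       = - (\<Sum>j\<in>{0..<m} - R. poly Q (unit_grid m \<delta> j) ^ k)"
proof -
  have "degree (Q ^ k) \<le> k * degree Q"
    using degree_power_le[of Q k] by (simp add: mult.commute)
  hence "int (degree (Q ^ k)) < m"
    using assms(3) by linarith
  moreover have "coeff (Q ^ k) 0 = 0"
    using assms(1,2) by (simp add: coeff_0_power)
  ultimately have "(\<Sum>j\<in>{0..<m}. poly (Q ^ k) (unit_grid m \<delta> j)) = 0"
    by (intro sum_poly_unit_grid_eq_0)
  thus ?thesis
    using sum.subset_diff[OF assms(4) finite_atLeastLessThan_int, of "\<lambda>j. poly Q (unit_grid m \<delta> j) ^ k"]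
    by (simp add: poly_power eq_neg_iff_add_eq_0 add.commute)
qed

lemma log_series_poly_unit_grid_eq_neg_compl:
  assumes "coeff Q 0 = 0" "int (K * degree Q) < m" "R \<subseteq> {0..<m}"
  shows "(\<Sum>k=1..K. (\<Sum>j\<in>R. poly Q (unit_grid m \<delta> j) ^ k) / of_nat k)
       = - (\<Sum>k=1..K. (\<Sum>j\<in>{0..<m} - R. poly Q (unit_grid m \<delta> j) ^ k) / of_nat k)"
proof -
  have "(\<Sum>j\<in>R. poly Q (unit_grid m \<delta> j) ^ k) = - (\<Sum>j\<in>{0..<m} - R. poly Q (unit_grid m \<delta> j) ^ k)"
    if "k \<in> {1..K}" for k
  proof -
    have "int (k * degree Q) \<le> int (K * degree Q)"
      using that by (simp only: of_nat_le_iff) simp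
    thus ?thesis
      using that assms by (intro sum_power_poly_unit_grid_eq_neg_compl) auto
  qed
  thus ?thesis
    by (simp add: sum_negf)
qed

lemma sum_ln_norm_one_minus_le:
  fixes x :: "'a \<Rightarrow> complex"
  assumes "\<And>j. j \<in> R \<Longrightarrow> norm (x j) \<le> \<rho>" "\<rho> < 1"
  shows "(\<Sum>j\<in>R. ln (norm (1 - x j)))
       \<le> - Re (\<Sum>k=1..K. (\<Sum>j\<in>R. x j ^ k) / of_nat k) + card R * (\<rho> ^ (K + 1) / (1 - \<rho>))"
proof -
  have "(\<Sum>j\<in>R. ln (norm (1 - x j)))
      \<le> (\<Sum>j\<in>R. - Re (\<Sum>k=1..K. x j ^ k / of_nat k) + \<rho> ^ (K + 1) / (1 - \<rho>))"
    by (intro sum_mono ln_norm_one_minus_le assms)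
  also have "\<dots> = - Re (\<Sum>k=1..K. (\<Sum>j\<in>R. x j ^ k) / of_nat k) + card R * (\<rho> ^ (K + 1) / (1 - \<rho>))"
    by (simp add: sum_subtractf Re_sum sum_divide_distrib sum.swap[of _ R])
  finally show ?thesis .
qed

lemma norm_sum_power_sums_le:
  fixes x :: "'a \<Rightarrow> complex" and B :: real
  assumes "\<And>j. j \<in> E \<Longrightarrow> norm (x j) \<le> B" "1 \<le> B"
  shows "norm (\<Sum>k=1..K. (\<Sum>j\<in>E. x j ^ k) / of_nat k) \<le> card E * B ^ K * harm K"
proof -
  have "norm (\<Sum>j\<in>E. x j ^ k) \<le> card E * B ^ K" if "k \<le> K" for k
  proof -
    have "norm (\<Sum>j\<in>E. x j ^ k) \<le> (\<Sum>j\<in>E. B ^ K)"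
    proof (rule order_trans[OF norm_sum sum_mono])
      fix j assume "j \<in> E"
      have "norm (x j ^ k) \<le> B ^ k"
        by (simp add: norm_power power_mono assms(1)[OF \<open>j \<in> E\<close>])
      also have "\<dots> \<le> B ^ K"
        using that assms(2) by (rule power_increasing)
      finally show "norm (x j ^ k) \<le> B ^ K" .
    qed
    thus ?thesis by simp
  qed
  hence "norm (\<Sum>k=1..K. (\<Sum>j\<in>E. x j ^ k) / of_nat k) \<le> (\<Sum>k=1..K. card E * B ^ K / real k)"
    by (intro order_trans[OF norm_sum sum_mono]) (simp add: norm_divide divide_right_mono)
  also have "\<dots> = card E * B ^ K * harm K"
    by (simp add: harm_def sum_distrib_left divide_inverse)
  finally show ?thesis .
qed

lemma prod_norm_poly_unit_grid_minus_le:
  fixes Q :: "complex poly" and R :: "int set" and \<rho> B :: real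
  assumes Q: "coeff Q 0 = 0" "int (K * degree Q) < m" and R: "R \<subseteq> {0..<m}"
    and \<zeta>: "norm \<zeta> = 1" and "\<rho> < 1" "1 \<le> B"
    and small: "\<And>j. j \<in> R \<Longrightarrow> norm (poly Q (unit_grid m \<delta> j)) \<le> \<rho>"
    and bounded: "\<And>j. j \<in> {0..<m} - R \<Longrightarrow> norm (poly Q (unit_grid m \<delta> j)) \<le> B"
  shows "(\<Prod>j\<in>R. norm (poly Q (unit_grid m \<delta> j) - \<zeta>))
       \<le> exp (card ({0..<m} - R) * B ^ K * harm K + card R * (\<rho> ^ (K + 1) / (1 - \<rho>)))"
proof -
  define P where "P = smult (cnj \<zeta>) Q"
  define x where "x j = poly P (unit_grid m \<delta> j)" for j
  have \<zeta>_cnj: "\<zeta> * cnj \<zeta> = 1"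
    using \<zeta> complex_norm_square[of \<zeta>] by simp
  have norm_x: "norm (x j) = norm (poly Q (unit_grid m \<delta> j))" for j
    by (simp add: x_def P_def norm_mult \<zeta>)
  have "- \<zeta> * (1 - x j) = \<zeta> * cnj \<zeta> * poly Q (unit_grid m \<delta> j) - \<zeta>" for j
    by (simp add: x_def P_def algebra_simps)
  hence "poly Q (unit_grid m \<delta> j) - \<zeta> = - \<zeta> * (1 - x j)" for j
    by (simp add: \<zeta>_cnj)
  hence rotate: "norm (poly Q (unit_grid m \<delta> j) - \<zeta>) = norm (1 - x j)" for j
    by (simp add: norm_mult \<zeta>)
  have "x j \<noteq> 1" if "j \<in> R" for j
    using small[OF that] norm_x[of j] \<open>\<rho> < 1\<close> by auto
  hence "(\<Prod>j\<in>R. norm (poly Q (unit_grid m \<delta> j) - \<zeta>)) = (\<Prod>j\<in>R. exp (ln (norm (1 - x j))))"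
    by (intro prod.cong) (simp_all add: rotate)
  also have "\<dots> = exp (\<Sum>j\<in>R. ln (norm (1 - x j)))"
    using finite_subset[OF R] by (simp add: exp_sum)
  also have "(\<Sum>j\<in>R. ln (norm (1 - x j)))
      \<le> - Re (\<Sum>k=1..K. (\<Sum>j\<in>R. x j ^ k) / of_nat k) + card R * (\<rho> ^ (K + 1) / (1 - \<rho>))"
    using small norm_x \<open>\<rho> < 1\<close> by (intro sum_ln_norm_one_minus_le) auto
  also have "(\<Sum>k=1..K. (\<Sum>j\<in>R. x j ^ k) / of_nat k) = - (\<Sum>k=1..K. (\<Sum>j\<in>{0..<m} - R. x j ^ k) / of_nat k)"
    unfolding x_def using Q R \<zeta> by (intro log_series_poly_unit_grid_eq_neg_compl) (auto simp: P_def)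
  also have "- Re (- (\<Sum>k=1..K. (\<Sum>j\<in>{0..<m} - R. x j ^ k) / of_nat k))
      \<le> card ({0..<m} - R) * B ^ K * harm K"
  proof -
    have "- Re (- (\<Sum>k=1..K. (\<Sum>j\<in>{0..<m} - R. x j ^ k) / of_nat k))
        \<le> norm (\<Sum>k=1..K. (\<Sum>j\<in>{0..<m} - R. x j ^ k) / of_nat k)"
      by (simp only: uminus_complex.sel minus_minus complex_Re_le_cmod)
    also have "\<dots> \<le> card ({0..<m} - R) * B ^ K * harm K"
      using bounded norm_x \<open>1 \<le> B\<close> by (intro norm_sum_power_sums_le) auto
    finally show ?thesis .
  qed
  finally show ?thesis
    by simp
qed

section \<open>The polynomial h\<close>

definition hh_poly :: "(real \<Rightarrow> nat) \<Rightarrow> real \<Rightarrow> complex poly" where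
  "hh_poly rs a = (\<Sum>i=1..rr a. monom (of_real ((1 - a ^ 10) * ltil rs a * (eps (rs a) i * dd a i))) i)"

lemma poly_hh_poly: "poly (hh_poly rs a) z = hh rs a z"
  by (simp add: hh_poly_def hh_def htil_def poly_sum poly_monom sum_distrib_left mult.assoc)

lemma coeff_0_hh_poly: "coeff (hh_poly rs a) 0 = 0"
  by (simp add: hh_poly_def coeff_sum coeff_monom)

lemma degree_hh_poly_le: "degree (hh_poly rs a) \<le> rr a"
  unfolding hh_poly_def by (rule degree_sum_le) (auto intro: order_trans[OF degree_monom_le])

lemma one_le_ln_plus_3: "1 \<le> ln (real j + 3)"
  using ln_ge_iff[of "real j + 3" 1] exp_le by simp

lemma lam_weight_pos: "0 < j \<Longrightarrow> 0 < 1 / ((real j)\<^sup>2 * (ln (real j + 3))\<^sup>2)"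
  using one_le_ln_plus_3[of j] by simp

lemma lam_weight_sum_ge: "1 \<le> r \<Longrightarrow> 1 / (ln 4)\<^sup>2 \<le> (\<Sum>j=1..r. 1 / ((real j)\<^sup>2 * (ln (real j + 3))\<^sup>2))"
  using member_le_sum[of 1 "{1..r}" "\<lambda>j. 1 / ((real j)\<^sup>2 * (ln (real j + 3))\<^sup>2)"] lam_weight_pos
  by (simp add: less_imp_le)

lemma lam_weight_sum_pos: "1 \<le> r \<Longrightarrow> 0 < (\<Sum>j=1..r. 1 / ((real j)\<^sup>2 * (ln (real j + 3))\<^sup>2))"
  by (intro sum_pos) (auto intro: lam_weight_pos)

lemma lam_pos: "1 \<le> rr a \<Longrightarrow> 0 < lam a"
  using lam_weight_sum_pos by (simp add: lam_def)

lemma lam_le_9: "1 \<le> rr a \<Longrightarrow> lam a \<le> 9"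
proof -
  assume "1 \<le> rr a"
  have "0 < ln (4::real)" "ln (4::real) \<le> 3"
    using ln_le_minus_one[of 4] by auto
  have "lam a \<le> 1 / (1 / (ln 4)\<^sup>2)"
    unfolding lam_def using \<open>0 < ln 4\<close> lam_weight_sum_pos[OF \<open>1 \<le> rr a\<close>]
    by (intro divide_left_mono lam_weight_sum_ge \<open>1 \<le> rr a\<close>) auto
  also have "\<dots> = (ln 4)\<^sup>2"
    by simp
  also have "\<dots> \<le> 3\<^sup>2"
    using \<open>ln 4 \<le> 3\<close> \<open>0 < ln 4\<close> by (intro power_mono) auto
  finally show ?thesis
    by simp
qed

lemma dd_nonneg: "0 \<le> dd a j"
  by (simp add: dd_def lam_def sum_nonneg)

lemma sum_dd: "1 \<le> rr a \<Longrightarrow> (\<Sum>j=1..rr a. dd a j) = 1"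
proof -
  assume "1 \<le> rr a"
  have "(\<Sum>j=1..rr a. dd a j) = lam a * (\<Sum>j=1..rr a. 1 / ((real j)\<^sup>2 * (ln (real j + 3))\<^sup>2))"
    by (simp add: dd_def sum_distrib_left)
  thus ?thesis
    using lam_weight_sum_pos[OF \<open>1 \<le> rr a\<close>] by (simp add: lam_def)
qed

lemma norm_hh_le:
  assumes "norm z \<le> 1" "0 \<le> a" "a \<le> 1" "0 < ltil rs a" "1 \<le> rr a"
  shows "norm (hh rs a z) \<le> ltil rs a"
proof -
  define c where "c i = (1 - a ^ 10) * ltil rs a * (eps (rs a) i * dd a i)" for i
  have "0 \<le> 1 - a ^ 10"
    using assms(2,3) by (simp add: power_le_one)
  have "norm (hh rs a z) \<le> (\<Sum>i=1..rr a. norm (of_real (c i) * z ^ i))"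
    unfolding poly_hh_poly[symmetric] hh_poly_def c_def by (simp add: poly_sum poly_monom norm_sum)
  also have "\<dots> \<le> (\<Sum>i=1..rr a. (1 - a ^ 10) * ltil rs a * dd a i)"
  proof (rule sum_mono)
    fix i
    have "norm (of_real (c i) * z ^ i) = \<bar>c i\<bar> * norm z ^ i"
      by (simp only: norm_mult norm_of_real norm_power)
    also have "\<dots> \<le> \<bar>c i\<bar>"
      using assms(1) by (simp add: power_le_one mult_left_le)
    also have "\<bar>c i\<bar> = (1 - a ^ 10) * ltil rs a * dd a i"
      using \<open>0 \<le> 1 - a ^ 10\<close> assms(4) dd_nonneg[of a i] by (simp add: c_def abs_mult eps_def)
    finally show "norm (of_real (c i) * z ^ i) \<le> (1 - a ^ 10) * ltil rs a * dd a i" .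
  qed
  also have "\<dots> = (1 - a ^ 10) * ltil rs a"
    using sum_dd[OF assms(5)] by (simp add: sum_distrib_left[symmetric])
  also have "\<dots> \<le> ltil rs a"
    using assms(2,4) by (simp add: mult_le_cancel_right1)
  finally show ?thesis .
qed

lemma sum_inverse_square_tail_le:
  assumes "1 \<le> s" "s \<le> r"
  shows "(\<Sum>j=s+1..r. 1 / (real j)\<^sup>2) \<le> 1 / real s - 1 / real r"
  using assms(2)
proof (induction r rule: dec_induct)
  case base
  show ?case by simp
next
  case (step r)
  have "1 \<le> real r"
    using assms(1) step.hyps(1) by simp
  hence "1 / (real r + 1)\<^sup>2 \<le> 1 / (real r * (real r + 1))"
    by (intro divide_left_mono) (auto simp: power2_eq_square)
  also have "\<dots> = 1 / real r - 1 / (real r + 1)"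
    using \<open>1 \<le> real r\<close> by (simp add: field_simps)
  finally have "1 / (real r + 1)\<^sup>2 \<le> 1 / real r - 1 / (real r + 1)" .
  thus ?case
    using step.IH step.hyps(1) by (simp add: add.commute)
qed

lemma sum_eps_dd:
  assumes "s \<le> rr a" "1 \<le> rr a"
  shows "(\<Sum>j=1..rr a. eps s j * dd a j) = 1 - 2 * (\<Sum>j=s+1..rr a. dd a j)"
proof -
  have split: "(\<Sum>j=1..rr a. f j) = (\<Sum>j=1..s. f j) + (\<Sum>j=s+1..rr a. f j)" for f :: "nat \<Rightarrow> real"
    using assms(1) sum.atLeastLessThan_concat[of 1 "s + 1" "rr a + 1" f]
    by (cases "s = 0") (simp_all add: atLeastLessThanSuc_atLeastAtMost)
  have "(\<Sum>j=1..rr a. eps s j * dd a j) = (\<Sum>j=1..s. eps s j * dd a j) + (\<Sum>j=s+1..rr a. eps s j * dd a j)"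
    by (rule split)
  also have "(\<Sum>j=1..s. eps s j * dd a j) = (\<Sum>j=1..s. dd a j)"
    by (intro sum.cong) (auto simp: eps_def)
  also have "(\<Sum>j=s+1..rr a. eps s j * dd a j) = - (\<Sum>j=s+1..rr a. dd a j)"
    unfolding sum_negf[symmetric] by (intro sum.cong) (auto simp: eps_def)
  also have "(\<Sum>j=1..s. dd a j) = 1 - (\<Sum>j=s+1..rr a. dd a j)"
    using split[of "dd a"] sum_dd[OF assms(2)] by simp
  finally show ?thesis
    by simp
qed

lemma dd_tail_le:
  assumes "1 \<le> s" "s \<le> rr a"
  shows "(\<Sum>j=s+1..rr a. dd a j) \<le> 9 / (real s * (ln (real s + 4))\<^sup>2)"
proof -
  have "dd a j \<le> 9 / (ln (real s + 4))\<^sup>2 * (1 / (real j)\<^sup>2)" if "j \<in> {s+1..rr a}" for j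
  proof -
    have "0 < ln (real s + 4)" "ln (real s + 4) \<le> ln (real j + 3)"
      using that by auto
    hence "(ln (real s + 4))\<^sup>2 \<le> (ln (real j + 3))\<^sup>2"
      by (intro power_mono) auto
    hence "lam a / ((real j)\<^sup>2 * (ln (real j + 3))\<^sup>2) \<le> lam a / ((real j)\<^sup>2 * (ln (real s + 4))\<^sup>2)"
      using that lam_pos[of a] assms \<open>0 < ln (real s + 4)\<close>
      by (intro divide_left_mono mult_left_mono) auto
    also have "\<dots> \<le> 9 / ((real j)\<^sup>2 * (ln (real s + 4))\<^sup>2)"
      using that lam_le_9[of a] assms by (intro divide_right_mono) auto
    finally show ?thesis
      by (simp add: dd_def mult.commute)
  qed
  hence "(\<Sum>j=s+1..rr a. dd a j) \<le> 9 / (ln (real s + 4))\<^sup>2 * (\<Sum>j=s+1..rr a. 1 / (real j)\<^sup>2)"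
    unfolding sum_distrib_left by (rule sum_mono)
  also have "\<dots> \<le> 9 / (ln (real s + 4))\<^sup>2 * (1 / real s)"
  proof -
    have "0 \<le> 1 / real (rr a)"
      by simp
    hence "(\<Sum>j=s+1..rr a. 1 / (real j)\<^sup>2) \<le> 1 / real s"
      using sum_inverse_square_tail_le[OF assms] by linarith
    thus ?thesis
      by (intro mult_left_mono) auto
  qed
  finally show ?thesis
    by (simp add: mult.commute)
qed

lemma rstar_ok_lower_bound:
  assumes "rstar_ok a s"
  shows "real (rr a) / ((ln (real (rr a) + 3))\<^sup>2 + 1) \<le> real s"
proof -
  define L where "L = (ln (real (rr a) + 3))\<^sup>2"
  have s: "1 \<le> s" "s \<le> rr a"
    and gap: "0 \<le> (\<Sum>j=1..s. 1 / (ln (real j + 3))\<^sup>2) - (\<Sum>j=s+1..rr a. 1 / (ln (real j + 3))\<^sup>2)"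
    using assms by (auto simp: rstar_ok_def)
  have "1 \<le> L"
    using one_le_ln_plus_3[of "rr a"] by (simp add: L_def one_le_power)
  have "(\<Sum>j=1..s. 1 / (ln (real j + 3))\<^sup>2) \<le> (\<Sum>j=1..s. 1)"
    using one_le_ln_plus_3 by (intro sum_mono) (simp add: one_le_power)
  moreover have "(\<Sum>j=s+1..rr a. 1 / L) \<le> (\<Sum>j=s+1..rr a. 1 / (ln (real j + 3))\<^sup>2)"
  proof (rule sum_mono)
    fix j assume "j \<in> {s+1..rr a}"
    hence "(ln (real j + 3))\<^sup>2 \<le> L"
      using one_le_ln_plus_3[of j] unfolding L_def by (intro power_mono) auto
    thus "1 / L \<le> 1 / (ln (real j + 3))\<^sup>2"
      using one_le_ln_plus_3[of j] \<open>1 \<le> L\<close> by (intro divide_left_mono) (auto intro!: mult_pos_pos)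
  qed
  ultimately have "real (rr a - s) / L \<le> real s"
    using gap by simp
  hence "real (rr a) \<le> real s * (L + 1)"
    using s \<open>1 \<le> L\<close> by (simp add: divide_le_eq of_nat_diff algebra_simps)
  thus ?thesis
    using \<open>1 \<le> L\<close> by (simp add: L_def divide_le_eq)
qed

lemma ltil_le_one_plus_tail:
  assumes "rs a \<le> rr a" "1 \<le> rr a" "(\<Sum>j=rs a+1..rr a. dd a j) \<le> 1/4"
  shows "0 < ltil rs a \<and> ltil rs a \<le> 1 + 4 * (\<Sum>j=rs a+1..rr a. dd a j)"
proof -
  define T where "T = (\<Sum>j=rs a+1..rr a. dd a j)"
  have "0 \<le> T" "T \<le> 1/4"
    using assms(3) by (simp_all add: T_def sum_nonneg dd_nonneg)
  have ltil_eq: "ltil rs a = 1 / (1 - 2 * T)"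
    using sum_eps_dd[OF assms(1,2)] by (simp add: ltil_def T_def)
  have "(1 + 4 * T) * (1 - 2 * T) = 1 + 2 * T * (1 - 4 * T)"
    by (simp add: algebra_simps)
  moreover have "0 \<le> 2 * T * (1 - 4 * T)"
    using \<open>0 \<le> T\<close> \<open>T \<le> 1/4\<close> by (intro mult_nonneg_nonneg) auto
  ultimately have "1 \<le> (1 + 4 * T) * (1 - 2 * T)"
    by linarith
  hence "ltil rs a \<le> 1 + 4 * T"
    using \<open>T \<le> 1/4\<close> by (simp add: ltil_eq divide_le_eq)
  moreover have "0 < ltil rs a"
    using \<open>T \<le> 1/4\<close> by (simp add: ltil_eq)
  ultimately show ?thesis
    by (simp add: T_def)
qed

lemma dd_tail_le_rr:
  fixes a :: real
  defines "r \<equiv> rr a"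
  defines "F \<equiv> real r / ((ln (real r + 3))\<^sup>2 + 1)"
  assumes ok: "rstar_ok a s" and "40 \<le> r" and asymp: "9 * real r / (F * (ln (F + 4))\<^sup>2) \<le> 10"
  shows "(\<Sum>j=s+1..r. dd a j) \<le> 10 / real r"
proof -
  have s: "1 \<le> s" "s \<le> r"
    using ok by (auto simp: rstar_ok_def r_def)
  have "0 < F" "F \<le> real s"
    using rstar_ok_lower_bound[OF ok] \<open>40 \<le> r\<close> by (auto simp: F_def r_def add_pos_nonneg)
  have "(\<Sum>j=s+1..r. dd a j) \<le> 9 / (real s * (ln (real s + 4))\<^sup>2)"
    using dd_tail_le[of s a] s by (simp add: r_def)
  also have "\<dots> \<le> 9 / (F * (ln (F + 4))\<^sup>2)"
    using \<open>0 < F\<close> \<open>F \<le> real s\<close>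
    by (intro divide_left_mono mult_mono power_mono) (auto intro!: mult_pos_pos)
  also have "\<dots> \<le> 10 / real r"
    using asymp \<open>40 \<le> r\<close> \<open>0 < F\<close> by (simp add: field_simps)
  finally show ?thesis .
qed

lemma ltil_le:
  fixes a :: real
  defines "r \<equiv> rr a"
  defines "F \<equiv> real r / ((ln (real r + 3))\<^sup>2 + 1)"
  assumes ok: "rstar_ok a (rs a)" and "40 \<le> r" and asymp: "9 * real r / (F * (ln (F + 4))\<^sup>2) \<le> 10"
  shows "0 < ltil rs a \<and> ltil rs a \<le> 1 + 40 / real r"
proof -
  have tail: "(\<Sum>j=rs a+1..r. dd a j) \<le> 10 / real r"
    using ok \<open>40 \<le> r\<close> asymp unfolding r_def F_def by (rule dd_tail_le_rr)
  moreover have "10 / real r \<le> 1/4"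
    using \<open>40 \<le> r\<close> by (simp add: field_simps)
  ultimately have "(\<Sum>j=rs a+1..r. dd a j) \<le> 1/4"
    by linarith
  hence "0 < ltil rs a \<and> ltil rs a \<le> 1 + 4 * (\<Sum>j=rs a+1..r. dd a j)"
    using ok \<open>40 \<le> r\<close> unfolding r_def by (intro ltil_le_one_plus_tail) (auto simp: rstar_ok_def)
  thus ?thesis
    using tail by simp
qed

lemma eventually_ltil_le:
  assumes "\<forall>\<^sub>F a in at_right 0. rstar_ok a (rs a)"
  shows "\<forall>\<^sub>F a in at_right 0. 0 < ltil rs a \<and> ltil rs a \<le> 1 + 40 / real (rr a)"
proof -
  have "\<forall>\<^sub>F r in sequentially.
          9 * real r / ((real r / ((ln (real r + 3))\<^sup>2 + 1)) * (ln (real r / ((ln (real r + 3))\<^sup>2 + 1) + 4))\<^sup>2) \<le> 10"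
    by real_asymp
  then obtain R where R: "\<And>r. R \<le> r \<Longrightarrow>
          9 * real r / ((real r / ((ln (real r + 3))\<^sup>2 + 1)) * (ln (real r / ((ln (real r + 3))\<^sup>2 + 1) + 4))\<^sup>2) \<le> 10"
    unfolding eventually_sequentially by blast
  have "filterlim (\<lambda>a::real. a powr (-1/2)) at_top (at_right 0)"
    by real_asymp
  hence "\<forall>\<^sub>F a in at_right 0. real (max R 40) \<le> a powr (-1/2)"
    by (simp add: filterlim_at_top)
  hence "\<forall>\<^sub>F a in at_right 0. max R 40 \<le> rr a"
    by (rule eventually_mono) (simp add: rr_def le_nat_floor)
  with assms show ?thesis
  proof eventually_elim
    case (elim a)
    thus ?case
      using R[of "rr a"] by (intro ltil_le) auto
  qed
qed

lemma norm_unit_grid_middle_le: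
  fixes f :: "complex \<Rightarrow> complex" and m J j :: int
  assumes decay: "\<And>t. \<bar>t\<bar> \<le> 1/2 \<Longrightarrow> \<tau> < \<bar>t\<bar> \<Longrightarrow> norm (f (cis (2 * pi * t))) \<le> 1 - \<kappa> * \<bar>t\<bar>"
    and "0 \<le> \<kappa>" "0 < m" "\<tau> < J / m" "J \<le> j" "j < m - J" "0 \<le> \<delta>" "\<delta> < 1" "0 \<le> J"
  shows "norm (f (unit_grid m \<delta> j)) \<le> 1 - \<kappa> * (J / m)"
proof -
  define t where "t = (j + \<delta>) / m"
  have "J / m \<le> t"
    using assms(3,5,7) by (simp add: t_def divide_right_mono)
  have "t < (m - J) / m"
    using assms(3,6,8) by (simp add: t_def divide_strict_right_mono)
  hence "t < 1 - J / m"
    using assms(3) by (simp add: diff_divide_distrib)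
  have decay': "norm (f (cis (2 * pi * u))) \<le> 1 - \<kappa> * (J / m)"
    if "\<bar>u\<bar> \<le> 1/2" "J / m \<le> \<bar>u\<bar>" for u
    using decay[OF that(1)] that(2) assms(2,4) mult_left_mono[OF that(2) assms(2)] by linarith
  have "0 \<le> J / m"
    using assms(3,9) by simp
  have grid: "unit_grid m \<delta> j = cis (2 * pi * t)"
    by (simp add: unit_grid_def t_def)
  show ?thesis
  proof (cases "t \<le> 1/2")
    case True
    thus ?thesis
      using decay'[of t] \<open>J / m \<le> t\<close> \<open>0 \<le> J / m\<close> by (simp add: grid)
  next
    case False
    have "cis (2 * pi * (t - 1)) = cis (2 * pi * (t - 1)) * cis (2 * pi)"
      by simp
    hence "cis (2 * pi * t) = cis (2 * pi * (t - 1))"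
      by (simp add: cis_mult algebra_simps)
    thus ?thesis
      using decay'[of "t - 1"] False \<open>t < 1 - J / m\<close> \<open>0 \<le> J / m\<close> by (simp add: grid)
  qed
qed

lemma prod_norm_hh_minus_le:
  fixes J m :: int and \<kappa> B :: real
  defines "\<eta> \<equiv> \<kappa> * (J / m)"
  assumes decay: "\<And>t. \<bar>t\<bar> \<le> 1/2 \<Longrightarrow> \<tau> < \<bar>t\<bar> \<Longrightarrow> norm (hh rs a (cis (2 * pi * t))) \<le> 1 - \<kappa> * \<bar>t\<bar>"
    and "0 < \<kappa>" and a: "0 \<le> a" "a \<le> 1"
    and ltil: "0 < ltil rs a" "ltil rs a \<le> B" and "1 \<le> B" and "1 \<le> rr a"
    and J: "1 \<le> J" "2 * J \<le> m" "\<tau> < J / m" and K: "int (K * rr a) < m"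
    and "norm \<zeta> = 1" and \<delta>: "0 \<le> \<delta>" "\<delta> < 1"
  shows "(\<Prod>j\<in>{J..<m - J}. norm (hh rs a (unit_grid m \<delta> j) - \<zeta>))
       \<le> exp (2 * J * B ^ K * harm K + (m - 2 * J) * ((1 - \<eta>) ^ (K + 1) / \<eta>))"
proof -
  have "0 < m" "{J..<m - J} \<subseteq> {0..<m}"
    using J by auto
  have "0 < \<eta>"
    using \<open>0 < \<kappa>\<close> J(1) \<open>0 < m\<close> by (simp add: \<eta>_def)
  have "card ({0..<m} - {J..<m - J}) = nat (2 * J)"
    using card_Diff_subset[OF _ \<open>{J..<m - J} \<subseteq> {0..<m}\<close>] J by simp
  moreover have "card {J..<m - J} = nat (m - 2 * J)"
    by simp
  moreover have "(\<Prod>j\<in>{J..<m - J}. norm (poly (hh_poly rs a) (unit_grid m \<delta> j) - \<zeta>))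
      \<le> exp (card ({0..<m} - {J..<m - J}) * B ^ K * harm K
             + card {J..<m - J} * ((1 - \<eta>) ^ (K + 1) / (1 - (1 - \<eta>))))"
  proof (rule prod_norm_poly_unit_grid_minus_le)
    show "int (K * degree (hh_poly rs a)) < m"
      using K mult_le_mono2[OF degree_hh_poly_le, of K rs a] by linarith
    show "norm (poly (hh_poly rs a) (unit_grid m \<delta> j)) \<le> 1 - \<eta>" if "j \<in> {J..<m - J}" for j
      unfolding poly_hh_poly \<eta>_def
      using that J \<delta> \<open>0 < \<kappa>\<close> \<open>0 < m\<close>
      by (intro norm_unit_grid_middle_le[OF decay]) auto
    show "norm (poly (hh_poly rs a) (unit_grid m \<delta> j)) \<le> B" if "j \<in> {0..<m} - {J..<m - J}" for j
      unfolding poly_hh_poly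
      using norm_hh_le[of "unit_grid m \<delta> j" a rs] a ltil \<open>1 \<le> rr a\<close> by (simp add: unit_grid_def)
  qed (use \<open>1 \<le> B\<close> \<open>norm \<zeta> = 1\<close> coeff_0_hh_poly \<open>{J..<m - J} \<subseteq> {0..<m}\<close> \<open>0 < \<eta>\<close> in auto)
  ultimately show ?thesis
    using J by (simp add: poly_hh_poly)
qed

section \<open>Asymptotics of the parameters\<close>

lemma harm_le_one_plus_ln: "1 \<le> K \<Longrightarrow> harm K \<le> 1 + ln (real K)"
  using euler_mascheroni_sequence_decreasing[of 1 K] by (simp add: harm_def)

lemma power_one_minus_div_le:
  fixes \<eta> e x :: real
  assumes "0 < e" "e \<le> \<eta>" "\<eta> \<le> 1" "x \<le> real K"
  shows "(1 - \<eta>) ^ (K + 1) / \<eta> \<le> exp (- e * x) / e"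
proof -
  have "e * x \<le> \<eta> * real K"
  proof (cases "0 \<le> x")
    case True
    thus ?thesis
      using assms by (intro mult_mono) auto
  next
    case False
    hence "e * x < 0"
      using assms(1) by (simp add: mult_pos_neg)
    moreover have "0 \<le> \<eta> * real K"
      using assms by simp
    ultimately show ?thesis
      by linarith
  qed
  have "(1 - \<eta>) ^ (K + 1) \<le> (1 - \<eta>) ^ K"
    using assms by (intro power_decreasing) auto
  also have "\<dots> \<le> exp (- \<eta>) ^ K"
    using assms exp_ge_add_one_self[of "- \<eta>"] by (intro power_mono) auto
  also have "\<dots> = exp (- \<eta> * real K)"
    by (simp add: exp_of_nat_mult[symmetric] mult.commute)
  also have "\<dots> \<le> exp (- e * x)"
    using \<open>e * x \<le> \<eta> * real K\<close> by simp
  finally show ?thesis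
    using assms by (intro frac_le) auto
qed

(* The truncation order K of the logarithm series: KK c4 n * rr (aa n) < mm c4 n, so the first
   K power sums of h over the sample points vanish. *)
definition KK :: "real \<Rightarrow> nat \<Rightarrow> nat" where
  "KK c4 n = nat \<lfloor>real n powr (1/5) / (2 * c4)\<rfloor>"

lemma KK_bounds:
  assumes "0 < c4"
  shows "real n powr (1/5) / (2 * c4) - 1 < KK c4 n" "KK c4 n \<le> real n powr (1/5) / (2 * c4)"
  using assms by (simp_all add: KK_def)

lemma rr_aa_bounds: "real n powr (1/5) - 1 < rr (aa n)" "rr (aa n) \<le> real n powr (1/5)"
  by (simp_all add: rr_def aa_def powr_powr)

lemma mm_bounds: "real n powr (2/5) / c4 - 1 < mm c4 n" "mm c4 n \<le> real n powr (2/5) / c4"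
  by (simp_all add: mm_def)

lemma JJ1_bounds:
  "real n powr (-1/5) * (ln n) ^ 4 / c5 * mm c4 n - 1 < JJ1 c4 c5 n"
  "JJ1 c4 c5 n \<le> real n powr (-1/5) * (ln n) ^ 4 / c5 * mm c4 n"
  using real_of_int_floor_gt_diff_one[of "real n powr (-1/5) * mm c4 n * (ln n) ^ 4 / c5"]
  by (simp_all add: JJ1_def mult_ac)

lemma sqrt_aa: "sqrt (aa n) = real n powr (-1/5)"
  by (simp add: aa_def powr_half_sqrt[symmetric] powr_powr)

lemma ln_inverse_aa: "0 < n \<Longrightarrow> ln (1 / aa n) = 2/5 * ln n"
  by (simp add: aa_def powr_minus_divide[symmetric] ln_powr)

lemma JJ1_div_mm_bounds:
  assumes "0 < real n powr (2/5) / c4 - 1"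
  shows "real n powr (-1/5) * (ln n) ^ 4 / c5 - 1 / (real n powr (2/5) / c4 - 1) < JJ1 c4 c5 n / mm c4 n"
    and "JJ1 c4 c5 n / mm c4 n \<le> real n powr (-1/5) * (ln n) ^ 4 / c5"
proof -
  define q where "q = real n powr (-1/5) * (ln n) ^ 4 / c5"
  have m: "real n powr (2/5) / c4 - 1 < mm c4 n"
    by (rule mm_bounds)
  hence "0 < real_of_int (mm c4 n)"
    using assms by linarith
  have "(q * mm c4 n - 1) / mm c4 n < JJ1 c4 c5 n / mm c4 n"
    using JJ1_bounds(1)[of n c5 c4, folded q_def] \<open>0 < real_of_int (mm c4 n)\<close>
    by (rule divide_strict_right_mono)
  hence "q - 1 / mm c4 n < JJ1 c4 c5 n / mm c4 n"
    using \<open>0 < real_of_int (mm c4 n)\<close> by (simp add: diff_divide_distrib)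
  moreover have "1 / mm c4 n \<le> 1 / (real n powr (2/5) / c4 - 1)"
    using m assms by (intro divide_left_mono) auto
  ultimately show "q - 1 / (real n powr (2/5) / c4 - 1) < JJ1 c4 c5 n / mm c4 n"
    by linarith
  show "JJ1 c4 c5 n / mm c4 n \<le> q"
    using JJ1_bounds(2)[of c4 c5 n, folded q_def] \<open>0 < real_of_int (mm c4 n)\<close>
    by (simp add: field_simps)
qed

lemma filterlim_aa_at_right_0: "filterlim aa (at_right 0) sequentially"
  unfolding aa_def by real_asymp

lemma eventually_aa_bounds:
  "\<forall>\<^sub>F n in sequentially. 0 \<le> aa n \<and> aa n \<le> 1 \<and> 0 < ln (1 / aa n) \<and> 1 \<le> rr (aa n)"
proof -
  have "\<forall>\<^sub>F n in sequentially. real n powr (-2/5) \<le> 1" "\<forall>\<^sub>F n in sequentially. 2 \<le> real n powr (1/5)"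
    by real_asymp+
  moreover have "\<forall>\<^sub>F n in sequentially. 1 < n"
    by (rule eventually_gt_at_top)
  ultimately show ?thesis
  proof eventually_elim
    case (elim n)
    have "0 < ln (real n)"
      using elim(3) by (intro ln_gt_zero) simp
    moreover have "ln (1 / aa n) = 2/5 * ln n"
      using elim(3) by (intro ln_inverse_aa) simp
    ultimately have "0 < ln (1 / aa n)"
      by linarith
    moreover have "1 < real (rr (aa n))"
      using rr_aa_bounds(1)[of n] elim(2) by linarith
    ultimately show ?case
      using elim(1) by (simp add: aa_def)
  qed
qed

context
  fixes c4 :: real
  assumes c4: "0 < c4"
begin

lemma eventually_KK_rr_less_mm: "\<forall>\<^sub>F n in sequentially. int (KK c4 n * rr (aa n)) < mm c4 n"
proof -
  have "\<forall>\<^sub>F n in sequentially. real n powr (2/5) / c4 / 2 < real n powr (2/5) / c4 - 1"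
    using c4 by real_asymp
  thus ?thesis
  proof eventually_elim
    case (elim n)
    have "real (KK c4 n * rr (aa n)) \<le> real n powr (1/5) / (2 * c4) * real n powr (1/5)"
      unfolding of_nat_mult using KK_bounds(2)[OF c4] rr_aa_bounds(2) c4 by (intro mult_mono) auto
    also have "\<dots> = real n powr (2/5) / c4 / 2"
      by (simp add: powr_add[symmetric])
    also have "\<dots> < mm c4 n"
      using elim mm_bounds(1)[of n c4] by linarith
    finally have "real_of_int (int (KK c4 n * rr (aa n))) < real_of_int (mm c4 n)"
      by simp
    thus ?case
      by (simp only: of_int_less_iff)
  qed
qed

lemma eventually_power_KK_le: "\<forall>\<^sub>F n in sequentially. (1 + 40 / real (rr (aa n))) ^ KK c4 n \<le> exp (40 / c4)"
proof -
  have "\<forall>\<^sub>F n in sequentially. 2 \<le> real n powr (1/5)"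
    by real_asymp
  thus ?thesis
  proof eventually_elim
    case (elim n)
    define r where "r = real (rr (aa n))"
    have "real n powr (1/5) / 2 \<le> r" "0 < r"
      using elim rr_aa_bounds(1)[of n] by (simp_all add: r_def)
    have "real (KK c4 n) * c4 \<le> real n powr (1/5) / 2"
      using KK_bounds(2)[OF c4, of n] c4 by (simp add: field_simps)
    hence "real (KK c4 n) * (40 / r) \<le> 40 / c4"
      using \<open>real n powr (1/5) / 2 \<le> r\<close> \<open>0 < r\<close> c4 by (simp add: field_simps)
    have "(1 + 40 / r) ^ KK c4 n \<le> exp (40 / r) ^ KK c4 n"
      using \<open>0 < r\<close> by (intro power_mono) (simp_all add: add.commute exp_ge_add_one_self)
    also have "\<dots> = exp (real (KK c4 n) * (40 / r))"
      by (simp only: exp_of_nat_mult)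
    also have "\<dots> \<le> exp (40 / c4)"
      using \<open>real (KK c4 n) * (40 / r) \<le> 40 / c4\<close> by simp
    finally show ?case
      by (simp add: r_def)
  qed
qed

lemma eventually_harm_KK_le: "\<forall>\<^sub>F n in sequentially. harm (KK c4 n) \<le> 2 * ln n"
proof -
  have "\<forall>\<^sub>F n in sequentially. real n powr (1/5) / (2 * c4) \<le> real n"
       "\<forall>\<^sub>F n in sequentially. 1 \<le> ln n"
    using c4 by real_asymp+
  thus ?thesis
  proof eventually_elim
    case (elim n)
    show ?case
    proof (cases "KK c4 n = 0")
      case True
      thus ?thesis
        using elim(2) by (simp add: harm_def)
    next
      case False
      have "real (KK c4 n) \<le> real n"
        using KK_bounds(2)[OF c4, of n] elim(1) by linarith
      hence "ln (real (KK c4 n)) \<le> ln n"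
        using False by simp
      thus ?thesis
        using harm_le_one_plus_ln[of "KK c4 n"] False elim(2) by simp
    qed
  qed
qed

end

context
  fixes c4 c5 :: real
  assumes c4: "0 < c4" and c5: "0 < c5"
begin

lemma eventually_JJ1_bounds: "\<forall>\<^sub>F n in sequentially. 1 \<le> JJ1 c4 c5 n \<and> 2 * JJ1 c4 c5 n \<le> mm c4 n"
proof -
  have "\<forall>\<^sub>F n in sequentially. 2 \<le> real n powr (-1/5) * (ln n) ^ 4 / c5 * (real n powr (2/5) / c4 - 1)"
       "\<forall>\<^sub>F n in sequentially. real n powr (-1/5) * (ln n) ^ 4 / c5 \<le> 1/2"
    using c4 c5 by real_asymp+
  thus ?thesis
  proof eventually_elim
    case (elim n)
    define q where "q = real n powr (-1/5) * (ln n) ^ 4 / c5"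
    have "0 \<le> q"
      using c5 by (simp add: q_def)
    have "0 < real_of_int (mm c4 n)"
      using elim(1)[folded q_def] mm_bounds(1)[of n c4] \<open>0 \<le> q\<close>
      by (smt (verit) mult_nonneg_nonpos)
    have "q * (real n powr (2/5) / c4 - 1) \<le> q * mm c4 n"
      using mm_bounds(1)[of n c4] \<open>0 \<le> q\<close> by (intro mult_left_mono) auto
    hence "real_of_int 1 \<le> JJ1 c4 c5 n"
      using elim(1)[folded q_def] JJ1_bounds(1)[of n c5 c4, folded q_def] by linarith
    moreover have "2 * q * mm c4 n \<le> 1 * real_of_int (mm c4 n)"
      using elim(2)[folded q_def] \<open>0 < real_of_int (mm c4 n)\<close> by (intro mult_right_mono) auto
    hence "real_of_int (2 * JJ1 c4 c5 n) \<le> mm c4 n"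
      using JJ1_bounds(2)[of c4 c5 n, folded q_def] by simp
    ultimately show ?case
      by (simp only: of_int_le_iff)
  qed
qed

lemma eventually_JJ1_div_mm_gt: "\<forall>\<^sub>F n in sequentially. C6 * sqrt (aa n) < JJ1 c4 c5 n / mm c4 n"
proof -
  have "\<forall>\<^sub>F n in sequentially. 0 < real n powr (2/5) / c4 - 1"
       "\<forall>\<^sub>F n in sequentially.
          C6 * real n powr (-1/5) < real n powr (-1/5) * (ln n) ^ 4 / c5 - 1 / (real n powr (2/5) / c4 - 1)"
    using c4 c5 by real_asymp+
  thus ?thesis
  proof eventually_elim
    case (elim n)
    thus ?case
      using JJ1_div_mm_bounds(1)[OF elim(1), of c5] unfolding sqrt_aa by linarith
  qed
qed

lemma JJ1_le: "0 < n \<Longrightarrow> JJ1 c4 c5 n \<le> real n powr (1/5) * (ln n) ^ 4 / (c4 * c5)"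
proof -
  assume "0 < n"
  have "JJ1 c4 c5 n \<le> real n powr (-1/5) * (ln n) ^ 4 / c5 * mm c4 n"
    by (rule JJ1_bounds(2))
  also have "\<dots> \<le> real n powr (-1/5) * (ln n) ^ 4 / c5 * (real n powr (2/5) / c4)"
    using mm_bounds(2)[of c4 n] c5 by (intro mult_left_mono) auto
  also have "\<dots> = real n powr (1/5) * (ln n) ^ 4 / (c4 * c5)"
    using \<open>0 < n\<close> by (simp add: field_simps powr_add[symmetric])
  finally show ?thesis .
qed

lemma eventually_boundary_exponent_le:
  "\<forall>\<^sub>F n in sequentially.
     2 * JJ1 c4 c5 n * (1 + 40 / real (rr (aa n))) ^ KK c4 n * harm (KK c4 n)
       \<le> 4 * exp (40 / c4) / (c4 * c5) * real n powr (1/5) * (ln n) ^ 5"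
  using eventually_power_KK_le[OF c4] eventually_harm_KK_le[OF c4] eventually_gt_at_top[of 0]
proof eventually_elim
  case (elim n)
  have "2 * JJ1 c4 c5 n \<le> 2 * (real n powr (1/5) * (ln n) ^ 4 / (c4 * c5))"
    using JJ1_le[OF elim(3)] by simp
  hence "2 * JJ1 c4 c5 n * (1 + 40 / real (rr (aa n))) ^ KK c4 n * harm (KK c4 n)
      \<le> 2 * (real n powr (1/5) * (ln n) ^ 4 / (c4 * c5)) * exp (40 / c4) * (2 * ln n)"
    using elim c4 c5 by (intro mult_mono) (auto simp: harm_nonneg)
  also have "\<dots> = 4 * exp (40 / c4) / (c4 * c5) * real n powr (1/5) * (ln n) ^ 5"
    by (simp add: field_simps eval_nat_numeral)
  finally show ?case .
qed

lemma eventually_eta_bounds: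
  "\<forall>\<^sub>F n in sequentially.
     let \<eta> = c5 / (ln (1 / aa n))\<^sup>2 * (JJ1 c4 c5 n / mm c4 n)
     in c5 / (2/5 * ln n)\<^sup>2 * (real n powr (-1/5) * (ln n) ^ 4 / c5 - 1 / (real n powr (2/5) / c4 - 1)) \<le> \<eta>
        \<and> \<eta> \<le> 1 \<and> 0 < JJ1 c4 c5 n"
proof -
  define X where "X n = real n powr (2/5) / c4" for n :: nat
  define q where "q n = real n powr (-1/5) * (ln n) ^ 4 / c5" for n :: nat
  have "\<forall>\<^sub>F n in sequentially. 0 < X n - 1"
       "\<forall>\<^sub>F n in sequentially. 0 < q n - 1 / (X n - 1)"
       "\<forall>\<^sub>F n in sequentially. c5 / (2/5 * ln n)\<^sup>2 * q n \<le> 1"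
    unfolding X_def q_def using c4 c5 by real_asymp+
  moreover have "\<forall>\<^sub>F n in sequentially. 1 < n"
    by (rule eventually_gt_at_top)
  ultimately show ?thesis
  proof eventually_elim
    case (elim n)
    define \<kappa> where "\<kappa> = c5 / (2/5 * ln n)\<^sup>2"
    have "0 < \<kappa>"
      using c5 elim(4) by (simp add: \<kappa>_def)
    have J_div: "q n - 1 / (X n - 1) < JJ1 c4 c5 n / mm c4 n" "JJ1 c4 c5 n / mm c4 n \<le> q n"
      using JJ1_div_mm_bounds[of n c4 c5] elim(1) by (simp_all add: X_def q_def)
    have "0 < real_of_int (mm c4 n)"
      using mm_bounds(1)[of n c4] elim(1) by (simp add: X_def)
    moreover have "0 < JJ1 c4 c5 n / mm c4 n"
      using J_div(1) elim(2) by linarith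
    ultimately have "0 < JJ1 c4 c5 n"
      by (simp add: zero_less_divide_iff)
    moreover have "\<kappa> * (q n - 1 / (X n - 1)) \<le> \<kappa> * (JJ1 c4 c5 n / mm c4 n)"
      using J_div(1) \<open>0 < \<kappa>\<close> by (intro mult_left_mono) auto
    moreover have "\<kappa> * (JJ1 c4 c5 n / mm c4 n) \<le> 1"
      using J_div(2) \<open>0 < \<kappa>\<close> elim(3) mult_left_mono[of _ "q n" \<kappa>] unfolding \<kappa>_def by fastforce
    moreover have ln_eq: "ln (1 / aa n) = 2/5 * ln n"
      using elim(4) by (intro ln_inverse_aa) simp
    ultimately show ?case
      unfolding Let_def ln_eq \<kappa>_def[symmetric] q_def[symmetric] X_def[symmetric] by blast
  qed
qed

lemma eventually_middle_exponent_le: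
  "\<forall>\<^sub>F n in sequentially.
     let \<eta> = c5 / (ln (1 / aa n))\<^sup>2 * (JJ1 c4 c5 n / mm c4 n)
     in (mm c4 n - 2 * JJ1 c4 c5 n) * ((1 - \<eta>) ^ (KK c4 n + 1) / \<eta>) \<le> real n powr (1/5) * (ln n) ^ 5"
proof -
  define X where "X n = real n powr (2/5) / c4" for n :: nat
  define e where "e n = c5 / (2/5 * ln n)\<^sup>2 * (real n powr (-1/5) * (ln n) ^ 4 / c5 - 1 / (X n - 1))"
    for n :: nat
  have "\<forall>\<^sub>F n in sequentially. 0 < e n"
       "\<forall>\<^sub>F n in sequentially.
          X n * exp (- e n * (real n powr (1/5) / (2 * c4) - 1)) / e n \<le> real n powr (1/5) * (ln n) ^ 5"
    unfolding X_def e_def using c4 c5 by real_asymp+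
  with eventually_eta_bounds show ?thesis
    unfolding Let_def
  proof eventually_elim
    case (elim n)
    define \<eta> where "\<eta> = c5 / (ln (1 / aa n))\<^sup>2 * (JJ1 c4 c5 n / mm c4 n)"
    have "e n \<le> \<eta>" "\<eta> \<le> 1" "0 < JJ1 c4 c5 n"
      using elim(1) by (simp_all add: \<eta>_def e_def X_def)
    have "mm c4 n - 2 * JJ1 c4 c5 n \<le> X n"
      using mm_bounds(2)[of c4 n] \<open>0 < JJ1 c4 c5 n\<close> by (simp add: X_def)
    moreover have "0 \<le> (1 - \<eta>) ^ (KK c4 n + 1) / \<eta>"
      using \<open>e n \<le> \<eta>\<close> \<open>\<eta> \<le> 1\<close> elim(2) by simp
    moreover have "(1 - \<eta>) ^ (KK c4 n + 1) / \<eta> \<le> exp (- e n * (real n powr (1/5) / (2 * c4) - 1)) / e n"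
      using elim(2) \<open>e n \<le> \<eta>\<close> \<open>\<eta> \<le> 1\<close> KK_bounds(1)[OF c4, of n]
      by (intro power_one_minus_div_le) auto
    ultimately have "(mm c4 n - 2 * JJ1 c4 c5 n) * ((1 - \<eta>) ^ (KK c4 n + 1) / \<eta>)
        \<le> X n * (exp (- e n * (real n powr (1/5) / (2 * c4) - 1)) / e n)"
      using elim(2) c4 by (intro mult_mono) (auto simp: X_def)
    also have "\<dots> \<le> real n powr (1/5) * (ln n) ^ 5"
      using elim(3) by simp
    finally show ?case
      unfolding \<eta>_def .
  qed
qed

lemma eventually_prod_norm_hh_minus_le:
  assumes ok: "\<forall>\<^sub>F a in at_right 0. rstar_ok a (rs a)"
    and decay: "\<forall>\<^sub>F a in at_right 0. \<forall>t::real. \<bar>t\<bar> \<le> 1/2 \<and> \<bar>t\<bar> > C6 * sqrt a \<longrightarrow>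
                  norm (hh rs a (cis (2 * pi * t))) \<le> 1 - c5 * \<bar>t\<bar> / (ln (1 / a))\<^sup>2"
  shows "\<forall>\<^sub>F n in sequentially. \<forall>\<zeta> \<delta>. norm \<zeta> = 1 \<longrightarrow> 0 \<le> \<delta> \<longrightarrow> \<delta> < 1 \<longrightarrow>
           (\<Prod>j\<in>{JJ1 c4 c5 n..<mm c4 n - JJ1 c4 c5 n}. norm (hh rs (aa n) (unit_grid (mm c4 n) \<delta> j) - \<zeta>))
           \<le> exp ((4 * exp (40 / c4) / (c4 * c5) + 1) * real n powr (1/5) * (ln n) ^ 5)"
  using eventually_compose_filterlim[OF decay filterlim_aa_at_right_0]
    eventually_compose_filterlim[OF eventually_ltil_le[OF ok] filterlim_aa_at_right_0]
    eventually_aa_bounds eventually_JJ1_bounds eventually_JJ1_div_mm_gt[of C6] eventually_KK_rr_less_mm[OF c4]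
    eventually_boundary_exponent_le eventually_middle_exponent_le
proof eventually_elim
  case (elim n)
  have "(\<Prod>j\<in>{JJ1 c4 c5 n..<mm c4 n - JJ1 c4 c5 n}. norm (hh rs (aa n) (unit_grid (mm c4 n) \<delta> j) - \<zeta>))
      \<le> exp ((4 * exp (40 / c4) / (c4 * c5) + 1) * real n powr (1/5) * (ln n) ^ 5)"
    if "norm \<zeta> = 1" "0 \<le> \<delta>" "\<delta> < 1" for \<zeta> \<delta>
  proof -
    have "(\<Prod>j\<in>{JJ1 c4 c5 n..<mm c4 n - JJ1 c4 c5 n}. norm (hh rs (aa n) (unit_grid (mm c4 n) \<delta> j) - \<zeta>))
        \<le> exp (2 * JJ1 c4 c5 n * (1 + 40 / real (rr (aa n))) ^ KK c4 n * harm (KK c4 n)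
               + (mm c4 n - 2 * JJ1 c4 c5 n) * ((1 - c5 / (ln (1 / aa n))\<^sup>2 * (JJ1 c4 c5 n / mm c4 n)) ^ (KK c4 n + 1)
                                             / (c5 / (ln (1 / aa n))\<^sup>2 * (JJ1 c4 c5 n / mm c4 n))))"
      using elim(1-6) that c5
      by (intro prod_norm_hh_minus_le[where \<tau> = "C6 * sqrt (aa n)"]) (auto simp: mult.commute)
    also have "\<dots> \<le> exp ((4 * exp (40 / c4) / (c4 * c5) + 1) * real n powr (1/5) * (ln n) ^ 5)"
      unfolding exp_le_cancel_iff
      by (rule order_trans[OF add_mono[OF elim(7) elim(8)[unfolded Let_def]]]) (simp add: algebra_simps)
    finally show ?thesis .
  qed
  thus ?case
    by blast
qed

end

theorem lemma9:
  fixes c4 c5 C6 :: real and rs :: "real \<Rightarrow> nat"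
  assumes "c4 > 0" and "c5 > 0" and "C6 > 0"
    and "\<forall>\<^sub>F a in at_right 0. rstar_ok a (rs a)"
    and "\<forall>\<^sub>F a in at_right 0. \<forall>t::real. \<bar>t\<bar> \<le> c4 * a \<longrightarrow> hh rs a (cis (2 * pi * t)) \<in> Ga a"
    and "\<forall>\<^sub>F a in at_right 0. \<forall>t::real. \<bar>t\<bar> \<le> 1/2 \<and> \<bar>t\<bar> > C6 * sqrt a \<longrightarrow>
           norm (hh rs a (cis (2 * pi * t))) \<le> 1 - c5 * \<bar>t\<bar> / (ln (1 / a))^2"
  shows "\<exists>C>0. \<forall>\<^sub>F n in sequentially. \<forall>(\<zeta>::complex) (\<delta>::real).
           norm \<zeta> = 1 \<longrightarrow> 0 \<le> \<delta> \<longrightarrow> \<delta> < 1 \<longrightarrow>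
           (\<Prod>j\<in>{JJ1 c4 c5 n..<JJ2 c4 c5 n}.
              norm (hh rs (aa n) (cis (2 * pi * (of_int j + \<delta>) / of_int (mm c4 n))) - \<zeta>))
           \<le> exp (C * real n powr (1/5) * (ln (real n))^5)"
proof -
  have "0 < 4 * exp (40 / c4) / (c4 * c5) + 1"
    using assms(1,2) by (simp add: add_pos_nonneg)
  thus ?thesis
    using eventually_prod_norm_hh_minus_le[OF assms(1,2,4,6)]
    unfolding JJ2_def unit_grid_def by blast
qed

end
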